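(* Let $X$ be an anti-linear operator on $H^2(\mathbb{D})$. Then $XM_z=M_zX$ if and only if $X=J_{H^2(\mathbb{D})}M_\theta$ for some $\theta\in H^\infty(\mathbb{D})$.
   Context: $H^2(\mathbb{D})$ is the Hardy space of the unit disc, $M_z$ and $M_\theta$ denote multiplication by $z$ and by $\theta$, $H^\infty(\mathbb{D})$ is the algebra of bounded analytic functions on $\mathbb{D}$, and $J_{H^2(\mathbb{D})}(\sum a_nz^n)=\sum\bar a_nz^n$. *)

theory Defs
  imports "HOL-Analysis.Analysis"
begin

text \<open>The Hardy space H^2(D) is modelled by its Taylor coefficient sequences:
  f(z) = sum a_n z^n with sum |a_n|^2 < infinity.\<close>

definition H2 :: "(nat \<Rightarrow> complex) set" where
  "H2 = {a. summable (\<lambda>n. (cmod (a n))\<^sup>2)}"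

definition H2_norm :: "(nat \<Rightarrow> complex) \<Rightarrow> real" where
  "H2_norm a = sqrt (\<Sum>n. (cmod (a n))\<^sup>2)"

definition H2_fun :: "(nat \<Rightarrow> complex) \<Rightarrow> complex \<Rightarrow> complex" where
  "H2_fun a z = (\<Sum>n. a n * z ^ n)"

definition Mz :: "(nat \<Rightarrow> complex) \<Rightarrow> (nat \<Rightarrow> complex)" where
  "Mz a = (\<lambda>n. if n = 0 then 0 else a (n - 1))"

definition J :: "(nat \<Rightarrow> complex) \<Rightarrow> (nat \<Rightarrow> complex)" where
  "J a = (\<lambda>n. cnj (a n))"

definition Hinf :: "(complex \<Rightarrow> complex) set" where
  "Hinf = {\<theta>. \<theta> holomorphic_on ball 0 1 \<and> bounded (\<theta> ` ball 0 1)}"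

text \<open>Multiplication by theta: the Taylor coefficients of the function theta * f.\<close>
definition Mtheta :: "(complex \<Rightarrow> complex) \<Rightarrow> (nat \<Rightarrow> complex) \<Rightarrow> (nat \<Rightarrow> complex)" where
  "Mtheta \<theta> a = (\<lambda>n. (deriv ^^ n) (\<lambda>z. \<theta> z * H2_fun a z) 0 / fact n)"

definition antilinear_op :: "((nat \<Rightarrow> complex) \<Rightarrow> (nat \<Rightarrow> complex)) \<Rightarrow> bool" where
  "antilinear_op X \<longleftrightarrow>
     (\<forall>a\<in>H2. X a \<in> H2) \<and>
     (\<forall>a\<in>H2. \<forall>b\<in>H2. X (\<lambda>n. a n + b n) = (\<lambda>n. X a n + X b n)) \<and>
     (\<forall>c. \<forall>a\<in>H2. X (\<lambda>n. c * a n) = (\<lambda>n. cnj c * X a n)) \<and>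
     (\<exists>C. \<forall>a\<in>H2. H2_norm (X a) \<le> C * H2_norm a)"

end

theory Submission
  imports Defs "HOL-Complex_Analysis.Complex_Analysis"
begin

text \<open>Conjugating by \<open>J\<close> turns \<open>X\<close> into a bounded linear operator \<open>Y = J X\<close> that commutes
  with the shift. Writing \<open>f = f 0 + z (tail f)\<close> and recursing on the coefficients shows that
  \<open>Y f\<close> is the Cauchy product of \<open>f\<close> with \<open>g = Y 1\<close>, i.e. \<open>Y\<close> is multiplication by
  \<open>\<theta> = \<Sum> g\<^sub>n z\<^sup>n\<close>. Then \<open>\<theta>\<^sup>m = Y\<^sup>m 1\<close> has norm at most \<open>\<parallel>Y\<parallel>\<^sup>m\<close>, and since point evaluation
  at \<open>\<bar>z\<bar> < 1\<close> is a bounded functional, \<open>\<bar>\<theta> z\<bar>\<^sup>m \<le> K\<^sub>z \<parallel>Y\<parallel>\<^sup>m\<close> for all \<open>m\<close>, whence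
  \<open>\<bar>\<theta> z\<bar> \<le> \<parallel>Y\<parallel>\<close>. Conversely, any multiplication operator commutes with multiplication by \<open>z\<close>,
  and so does \<open>J\<close>.\<close>

lemma H2_fun_eq_eval_fps: "H2_fun a = eval_fps (Abs_fps a)"
  by (simp add: fun_eq_iff H2_fun_def eval_fps_def)

lemma Abs_fps_Mz: "Abs_fps (Mz a) = fps_X * Abs_fps a"
  by (simp add: fps_eq_iff Mz_def)

lemma Abs_fps_eq_const_plus_X_mult_tail:
  fixes a :: "nat \<Rightarrow> complex"
  shows "Abs_fps a = fps_const (a 0) + fps_X * Abs_fps (\<lambda>k. a (Suc k))"
  by (simp add: fps_eq_iff split: nat.split)

definition H2_one :: "nat \<Rightarrow> complex" where
  "H2_one = fps_nth 1"

lemma Abs_fps_H2_one [simp]: "Abs_fps H2_one = 1"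
  by (simp add: H2_one_def fps_nth_inverse)

lemma J_J [simp]: "J (J a) = a"
  by (simp add: J_def)

lemma J_Mz: "J (Mz a) = Mz (J a)"
  by (simp add: fun_eq_iff J_def Mz_def)

lemma H2_Mz: "a \<in> H2 \<Longrightarrow> Mz a \<in> H2"
  unfolding H2_def using summable_Suc_iff[of "\<lambda>n. (cmod (Mz a n))\<^sup>2"] by (simp add: Mz_def)

lemma H2_tail: "a \<in> H2 \<Longrightarrow> (\<lambda>k. a (Suc k)) \<in> H2"
  unfolding H2_def using summable_Suc_iff[of "\<lambda>n. (cmod (a n))\<^sup>2"] by simp

lemma H2_one_sq_norms: "(\<lambda>n. (cmod (H2_one n))\<^sup>2) sums 1"
proof -
  have "(\<lambda>n. (cmod (H2_one n))\<^sup>2) = (\<lambda>n. if n = 0 then 1 else 0)"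
    by (simp add: fun_eq_iff H2_one_def)
  then show ?thesis
    using sums_single[of 0 "\<lambda>_. 1::real"] by simp
qed

lemma H2_one: "H2_one \<in> H2"
  using H2_one_sq_norms by (auto simp: H2_def sums_iff)

lemma H2_norm_H2_one [simp]: "H2_norm H2_one = 1"
  using H2_one_sq_norms by (simp add: H2_norm_def sums_iff)

lemma H2_norm_nonneg: "a \<in> H2 \<Longrightarrow> 0 \<le> H2_norm a"
  unfolding H2_norm_def H2_def by (simp add: suminf_nonneg)

lemma H2_norm_eq_0_iff: "a \<in> H2 \<Longrightarrow> H2_norm a = 0 \<longleftrightarrow> a = (\<lambda>_. 0)"
  unfolding H2_norm_def H2_def by (simp add: suminf_eq_zero_iff fun_eq_iff)

section \<open>Point evaluation\<close>

lemma mult_le_weighted_amgm: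
  fixes x y t :: real
  assumes "0 < t"
  shows "x * y \<le> (t * x\<^sup>2 + y\<^sup>2 / t) / 2"
proof -
  have "0 \<le> (t * x - y)\<^sup>2 / t"
    using assms by simp
  also have "\<dots> = t * x\<^sup>2 - 2 * x * y + y\<^sup>2 / t"
    using assms by (simp add: power2_eq_square field_simps)
  finally show ?thesis
    by simp
qed

lemma H2_coeff_majorant:
  assumes "a \<in> H2" "cmod z < 1" "0 < t"
  shows "(\<lambda>n. (t * (cmod (a n))\<^sup>2 + ((cmod z)\<^sup>2) ^ n / t) / 2) sums
           ((t * (H2_norm a)\<^sup>2 + 1 / (1 - (cmod z)\<^sup>2) / t) / 2)"
    and "cmod (a n * z ^ n) \<le> (t * (cmod (a n))\<^sup>2 + ((cmod z)\<^sup>2) ^ n / t) / 2"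
proof -
  have "(\<lambda>n. ((cmod z)\<^sup>2) ^ n) sums (1 / (1 - (cmod z)\<^sup>2))"
    using assms(2) by (intro geometric_sums) (simp add: abs_square_less_1)
  moreover have "(\<lambda>n. (cmod (a n))\<^sup>2) sums (H2_norm a)\<^sup>2"
    using assms(1) by (simp add: H2_def H2_norm_def suminf_nonneg summable_sums)
  ultimately show "(\<lambda>n. (t * (cmod (a n))\<^sup>2 + ((cmod z)\<^sup>2) ^ n / t) / 2) sums
           ((t * (H2_norm a)\<^sup>2 + 1 / (1 - (cmod z)\<^sup>2) / t) / 2)"
    by (intro sums_divide sums_add sums_mult)
  have "cmod (a n * z ^ n) = cmod (a n) * cmod z ^ n"
    by (simp add: norm_mult norm_power)
  also have "\<dots> \<le> (t * (cmod (a n))\<^sup>2 + (cmod z ^ n)\<^sup>2 / t) / 2"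
    using assms(3) by (rule mult_le_weighted_amgm)
  finally show "cmod (a n * z ^ n) \<le> (t * (cmod (a n))\<^sup>2 + ((cmod z)\<^sup>2) ^ n / t) / 2"
    by (simp add: power_mult[symmetric] mult.commute)
qed

lemma H2_summable_norm:
  assumes "a \<in> H2" "cmod z < 1"
  shows "summable (\<lambda>n. cmod (a n * z ^ n))"
proof -
  note majorant = H2_coeff_majorant[OF assms zero_less_one]
  show ?thesis
    by (rule summable_comparison_test'[OF sums_summable[OF majorant(1)]]) (use majorant(2) in simp)
qed

text \<open>Weighted AM-GM with weight \<open>1 / H2_norm a\<close> makes the majorant linear in \<open>H2_norm a\<close>.\<close>

lemma H2_fun_norm_le:
  assumes "a \<in> H2" "cmod z < 1"
  shows "cmod (H2_fun a z) \<le> H2_norm a * ((1 + 1 / (1 - (cmod z)\<^sup>2)) / 2)"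
proof (cases "H2_norm a = 0")
  case True
  then have "a = (\<lambda>_. 0)"
    using H2_norm_eq_0_iff[OF assms(1)] by blast
  then have "H2_fun a z = 0"
    by (simp add: H2_fun_def)
  with True show ?thesis
    by simp
next
  case False
  define t where "t = 1 / H2_norm a"
  have "0 < t"
    using False H2_norm_nonneg[OF assms(1)] by (simp add: t_def)
  note majorant = H2_coeff_majorant[OF assms \<open>0 < t\<close>]
  have "cmod (H2_fun a z) \<le> (\<Sum>n. cmod (a n * z ^ n))"
    unfolding H2_fun_def by (rule summable_norm[OF H2_summable_norm[OF assms]])
  also have "\<dots> \<le> (t * (H2_norm a)\<^sup>2 + 1 / (1 - (cmod z)\<^sup>2) / t) / 2"
    using majorant by (intro sums_le[OF _ summable_sums[OF H2_summable_norm[OF assms]]])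
  also have "\<dots> = H2_norm a * ((1 + 1 / (1 - (cmod z)\<^sup>2)) / 2)"
    using False by (simp add: t_def power2_eq_square field_simps)
  finally show ?thesis .
qed

lemma fps_conv_radius_Abs_fps_H2:
  assumes "a \<in> H2"
  shows "1 \<le> fps_conv_radius (Abs_fps a)"
  unfolding fps_conv_radius_def
proof (simp, rule conv_radius_geI_ex')
  fix r :: real assume "0 < r" "ereal r < 1"
  then have "cmod (of_real r :: complex) < 1"
    by simp
  then show "summable (\<lambda>n. a n * of_real r ^ n)"
    by (rule summable_norm_cancel[OF H2_summable_norm[OF assms]])
qed

lemma norm_less_fps_conv_radius_H2:
  assumes "a \<in> H2" "cmod z < 1"
  shows "ereal (cmod z) < fps_conv_radius (Abs_fps a)"
proof -
  have "ereal (cmod z) < 1"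
    using assms(2) by simp
  then show ?thesis
    using fps_conv_radius_Abs_fps_H2[OF assms(1)] by (rule less_le_trans)
qed

lemma H2_fun_has_fps_expansion: "a \<in> H2 \<Longrightarrow> H2_fun a has_fps_expansion Abs_fps a"
  using norm_less_fps_conv_radius_H2[of a 0]
  by (simp add: H2_fun_eq_eval_fps eval_fps_has_fps_expansion zero_ereal_def)

lemma holomorphic_H2_fun: "a \<in> H2 \<Longrightarrow> H2_fun a holomorphic_on ball 0 1"
  unfolding H2_fun_eq_eval_fps
  by (rule holomorphic_on_eval_fps) (auto dest: norm_less_fps_conv_radius_H2)

lemma eval_fps_H2_power:
  assumes "a \<in> H2" "cmod z < 1"
  shows "eval_fps (Abs_fps a ^ m) z = H2_fun a z ^ m"
  using norm_less_fps_conv_radius_H2[OF assms] by (simp add: H2_fun_eq_eval_fps eval_fps_power)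

lemma Mtheta_eq_fps_nth_mult:
  assumes "\<theta> has_fps_expansion T" "f \<in> H2"
  shows "Mtheta \<theta> f = fps_nth (T * Abs_fps f)"
proof -
  have "(\<lambda>z. \<theta> z * H2_fun f z) has_fps_expansion T * Abs_fps f"
    using assms by (intro has_fps_expansion_mult H2_fun_has_fps_expansion)
  then show ?thesis
    by (simp add: fun_eq_iff Mtheta_def fps_nth_fps_expansion)
qed

lemma Mtheta_H2_fun:
  "g \<in> H2 \<Longrightarrow> f \<in> H2 \<Longrightarrow> Mtheta (H2_fun g) f = fps_nth (Abs_fps g * Abs_fps f)"
  by (intro Mtheta_eq_fps_nth_mult H2_fun_has_fps_expansion)

lemma Mtheta_Mz:
  assumes "\<theta> holomorphic_on ball 0 1" "f \<in> H2"
  shows "Mtheta \<theta> (Mz f) = Mz (Mtheta \<theta> f)"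
proof -
  define T where "T = fps_expansion \<theta> 0"
  have T: "\<theta> has_fps_expansion T"
    using assms(1) unfolding T_def by (auto intro: has_fps_expansion_fps_expansion[of "ball 0 1"])
  have "Mtheta \<theta> (Mz f) = fps_nth (T * (fps_X * Abs_fps f))"
    by (simp add: Mtheta_eq_fps_nth_mult[OF T H2_Mz[OF assms(2)]] Abs_fps_Mz)
  also have "\<dots> = fps_nth (fps_X * (T * Abs_fps f))"
    by (simp add: ac_simps)
  also have "\<dots> = Mz (Mtheta \<theta> f)"
    by (simp add: fun_eq_iff Mtheta_eq_fps_nth_mult[OF T assms(2)] Mz_def)
  finally show ?thesis .
qed

section \<open>Linear operators commuting with the shift\<close>

definition linear_op :: "((nat \<Rightarrow> complex) \<Rightarrow> (nat \<Rightarrow> complex)) \<Rightarrow> bool" where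
  "linear_op Y \<longleftrightarrow>
     (\<forall>a\<in>H2. Y a \<in> H2) \<and>
     (\<forall>a\<in>H2. \<forall>b\<in>H2. Y (\<lambda>n. a n + b n) = (\<lambda>n. Y a n + Y b n)) \<and>
     (\<forall>c. \<forall>a\<in>H2. Y (\<lambda>n. c * a n) = (\<lambda>n. c * Y a n)) \<and>
     (\<exists>C. \<forall>a\<in>H2. H2_norm (Y a) \<le> C * H2_norm a)"

lemma linear_op_J_comp: "antilinear_op X \<Longrightarrow> linear_op (\<lambda>a. J (X a))"
  unfolding antilinear_op_def linear_op_def by (simp add: J_def H2_def H2_norm_def)

lemma linear_op_positive_bound:
  assumes "linear_op Y"
  obtains C where "0 < C" "\<And>a. a \<in> H2 \<Longrightarrow> H2_norm (Y a) \<le> C * H2_norm a"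
proof -
  obtain C where C: "\<And>a. a \<in> H2 \<Longrightarrow> H2_norm (Y a) \<le> C * H2_norm a"
    using assms unfolding linear_op_def by blast
  have "H2_norm (Y a) \<le> max C 1 * H2_norm a" if "a \<in> H2" for a
    using C[OF that] mult_right_mono[OF max.cobounded1 H2_norm_nonneg[OF that]]
    by (rule order_trans)
  then show ?thesis
    by (intro that[of "max C 1"]) auto
qed

lemma shift_commuting_eq_mult:
  assumes Y: "linear_op Y" and comm: "\<forall>f\<in>H2. Y (Mz f) = Mz (Y f)"
  shows "\<forall>f\<in>H2. Y f = fps_nth (Abs_fps (Y H2_one) * Abs_fps f)"
proof -
  have add: "\<And>a b. a \<in> H2 \<Longrightarrow> b \<in> H2 \<Longrightarrow> Y (\<lambda>n. a n + b n) = (\<lambda>n. Y a n + Y b n)"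
    and scale: "\<And>c a. a \<in> H2 \<Longrightarrow> Y (\<lambda>n. c * a n) = (\<lambda>n. c * Y a n)"
    using Y unfolding linear_op_def by blast+
  have H2_scale: "(\<lambda>n. c * a n) \<in> H2" if "a \<in> H2" for c a
    using that by (simp add: H2_def norm_mult power_mult_distrib summable_mult)
  have decomp: "Y f = (\<lambda>n. f 0 * Y H2_one n + Mz (Y (\<lambda>k. f (Suc k))) n)" if f: "f \<in> H2" for f
  proof -
    have "f = (\<lambda>n. f 0 * H2_one n + Mz (\<lambda>k. f (Suc k)) n)"
      by (simp add: fun_eq_iff H2_one_def Mz_def)
    then have "Y f = Y (\<lambda>n. f 0 * H2_one n + Mz (\<lambda>k. f (Suc k)) n)"
      by simp
    also have "\<dots> = (\<lambda>n. f 0 * Y H2_one n + Mz (Y (\<lambda>k. f (Suc k))) n)"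
      using H2_tail[OF f] by (simp add: add H2_scale H2_one H2_Mz scale comm)
    finally show ?thesis .
  qed
  have "\<forall>f\<in>H2. Y f n = (Abs_fps (Y H2_one) * Abs_fps f) $ n" for n
  proof (induction n)
    case 0
    show ?case
      by (simp add: decomp Mz_def)
  next
    case (Suc n)
    show ?case
    proof
      fix f assume f: "f \<in> H2"
      have "Y f (Suc n) = f 0 * Y H2_one (Suc n) + Y (\<lambda>k. f (Suc k)) n"
        by (simp add: decomp[OF f] Mz_def)
      also have "\<dots> = (Abs_fps (Y H2_one) * Abs_fps f) $ Suc n"
        using Suc.IH H2_tail[OF f]
        by (subst (2) Abs_fps_eq_const_plus_X_mult_tail) (simp add: algebra_simps)
      finally show "Y f (Suc n) = (Abs_fps (Y H2_one) * Abs_fps f) $ Suc n" .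
    qed
  qed
  then show ?thesis
    by (simp add: fun_eq_iff)
qed

lemma le_if_pow_le_mult_pow:
  fixes x B C :: real
  assumes "0 < C" "\<And>m. x ^ m \<le> B * C ^ m"
  shows "x \<le> C"
proof (rule ccontr)
  assume "\<not> x \<le> C"
  then have "1 < x / C"
    using assms(1) by simp
  then obtain m where "B < (x / C) ^ m"
    using real_arch_pow by blast
  then have "B * C ^ m < x ^ m"
    using assms(1) by (simp add: power_divide field_simps)
  with assms(2)[of m] show False
    by simp
qed

lemma shift_commuting_multiplier_bounded:
  assumes Y: "linear_op Y" and comm: "\<forall>f\<in>H2. Y (Mz f) = Mz (Y f)"
    and "0 < C" and C: "\<And>a. a \<in> H2 \<Longrightarrow> H2_norm (Y a) \<le> C * H2_norm a"
    and z: "cmod z < 1"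
  shows "cmod (H2_fun (Y H2_one) z) \<le> C"
proof -
  define g where "g = Y H2_one"
  define p where "p m = (Y ^^ m) H2_one" for m
  have YH2: "\<And>a. a \<in> H2 \<Longrightarrow> Y a \<in> H2"
    using Y unfolding linear_op_def by blast
  have p_H2: "p m \<in> H2" for m
    by (induction m) (simp_all add: p_def H2_one YH2)
  have g: "g \<in> H2"
    by (simp add: g_def H2_one YH2)
  have "Abs_fps (p m) = Abs_fps g ^ m" for m
    by (induction m)
      (simp_all add: p_def g_def shift_commuting_eq_mult[OF Y comm] p_H2[unfolded p_def] fps_nth_inverse)
  then have p_fun: "H2_fun (p m) z = H2_fun g z ^ m" for m
    unfolding H2_fun_eq_eval_fps[of "p m"] by (simp add: eval_fps_H2_power[OF g z])
  have p_norm: "H2_norm (p m) \<le> C ^ m" for m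
  proof (induction m)
    case (Suc m)
    have "H2_norm (p (Suc m)) \<le> C * H2_norm (p m)"
      using C[OF p_H2[of m]] by (simp add: p_def)
    also have "\<dots> \<le> C * C ^ m"
      using Suc.IH \<open>0 < C\<close> by simp
    finally show ?case
      by simp
  qed (simp add: p_def)
  define K where "K = (1 + 1 / (1 - (cmod z)\<^sup>2)) / 2"
  have "0 \<le> K"
    using z by (simp add: K_def abs_square_less_1 less_imp_le)
  have "cmod (H2_fun g z) ^ m \<le> K * C ^ m" for m
  proof -
    have "cmod (H2_fun g z) ^ m = cmod (H2_fun (p m) z)"
      by (simp add: p_fun norm_power)
    also have "\<dots> \<le> H2_norm (p m) * K"
      unfolding K_def by (rule H2_fun_norm_le[OF p_H2 z])
    also have "\<dots> \<le> K * C ^ m"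
      using mult_right_mono[OF p_norm \<open>0 \<le> K\<close>] by (simp add: mult.commute)
    finally show ?thesis .
  qed
  then show ?thesis
    unfolding g_def using \<open>0 < C\<close> by (rule le_if_pow_le_mult_pow[rotated])
qed

lemma shift_commuting_eq_Mtheta:
  assumes Y: "linear_op Y" and comm: "\<forall>f\<in>H2. Y (Mz f) = Mz (Y f)"
  shows "\<exists>\<theta>\<in>Hinf. \<forall>f\<in>H2. Y f = Mtheta \<theta> f"
proof -
  obtain C where "0 < C" and C: "\<And>a. a \<in> H2 \<Longrightarrow> H2_norm (Y a) \<le> C * H2_norm a"
    using linear_op_positive_bound[OF Y] by blast
  define \<theta> where "\<theta> = H2_fun (Y H2_one)"
  have g: "Y H2_one \<in> H2"
    using Y H2_one unfolding linear_op_def by blast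
  have "\<theta> ` ball 0 1 \<subseteq> cball 0 C"
    using shift_commuting_multiplier_bounded[OF Y comm \<open>0 < C\<close> C] by (auto simp: \<theta>_def)
  then have "\<theta> \<in> Hinf"
    unfolding Hinf_def \<theta>_def using holomorphic_H2_fun[OF g] bounded_subset[OF bounded_cball] by blast
  moreover have "\<forall>f\<in>H2. Y f = Mtheta \<theta> f"
    using shift_commuting_eq_mult[OF Y comm] Mtheta_H2_fun[OF g] by (simp add: \<theta>_def)
  ultimately show ?thesis
    by blast
qed

theorem proposition10p1:
  assumes "antilinear_op X"
  shows "(\<forall>f\<in>H2. X (Mz f) = Mz (X f)) \<longleftrightarrow>
         (\<exists>\<theta>\<in>Hinf. \<forall>f\<in>H2. X f = J (Mtheta \<theta> f))"
proof
  assume "\<forall>f\<in>H2. X (Mz f) = Mz (X f)"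
  then have "\<forall>f\<in>H2. J (X (Mz f)) = Mz (J (X f))"
    by (simp add: J_Mz)
  then obtain \<theta> where "\<theta> \<in> Hinf" "\<forall>f\<in>H2. J (X f) = Mtheta \<theta> f"
    using shift_commuting_eq_Mtheta[OF linear_op_J_comp[OF assms]] by blast
  then show "\<exists>\<theta>\<in>Hinf. \<forall>f\<in>H2. X f = J (Mtheta \<theta> f)"
    by (metis J_J)
next
  assume "\<exists>\<theta>\<in>Hinf. \<forall>f\<in>H2. X f = J (Mtheta \<theta> f)"
  then obtain \<theta> where "\<theta> \<in> Hinf" "\<forall>f\<in>H2. X f = J (Mtheta \<theta> f)"
    by blast
  then show "\<forall>f\<in>H2. X (Mz f) = Mz (X f)"
    by (simp add: Hinf_def H2_Mz Mtheta_Mz J_Mz)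
qed

end
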